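(* Let $m\geq 2$ and $G=T^+_{m,1}$ with root $r$, stem $r'$, and children $r_1,\dots,r_m$ of $r$. If $S$ is a Type II set for $G$, then $N_G[r]\setminus\mathcal{P}^\infty(S)=\{r',r_i\}$ for some $i\in[m]$. Furthermore, for all $k\ge 0$, $$H^k_{m,1}=\langle\mathcal{H}^{1}\oplus\mathcal{E}^{m-1}\rangle^k_{m,0}\quad\text{and}\quad E^k_{m,1}=\langle\mathcal{H}^{0}\oplus\mathcal{E}^{m}\rangle^k_{m,0}+\sum_{\ell=0}^{m}\langle\mathcal{H}^{\ell}\oplus\mathcal{E}^{m-\ell}\rangle^{k-1}_{m,0}.$$
   Context: Power domination: for a graph $G=(V,E)$ and $S\subseteq V$, $\mathcal{P}^0(S)=N[S]$ and for $k\ge1$, $\mathcal{P}^k(S)=\mathcal{P}^{k-1}(S)\cup N^*(\mathcal{P}^{k-1}(S))$, where $x\in N^*(A)$ iff some $a\in A$ has $x$ as its only neighbor not in $A$; $\mathcal{P}^\infty(S)$ is the stable value (the set of observed vertices), and $S$ is a power dominating set if $\mathcal{P}^\infty(S)=V$. $T_{m,h}$ is the complete $m$-ary tree of height $h$ rooted at $r$; $T^+_{m,h}$ is $T_{m,h}$ plus a new vertex $r'$ (stem) joined to $r$. For $G=T^+_{m,h}$, a set $S\subseteq V(G)\setminus\{r'\}$ is Type I if it is a power dominating set for $G$; Type II if it is not but $S\cup\{r'\}$ is; Type 0 otherwise. $E^k_{m,h}$ and $H^k_{m,h}$ denote the numbers of Type I and Type II sets of size $k$ for $T^+_{m,h}$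 (zero for $k<0$). Define $$\langle\mathcal{H}^{\ell}\oplus\mathcal{E}^{m-\ell}\rangle^k_{m,h}=\sum \binom{m}{\ell}\binom{\ell}{s_0,\dots,s_k}\binom{m-\ell}{t_0,\dots,t_k}\Big(\prod_{j=1}^{\ell}H^{i_j}_{m,h}\Big)\Big(\prod_{j=\ell+1}^{m}E^{i_j}_{m,h}\Big),$$ the sum over all tuples of nonnegative integers $(i_1,\dots,i_m)$ with $i_1\le\cdots\le i_\ell$, $i_{\ell+1}\le\cdots\le i_m$, and $i_1+\cdots+i_m=k$, where $s_\alpha=|\{j\in[\ell]:i_j=\alpha\}|$ and $t_\beta=|\{j\in[\ell+1,m]:i_j=\beta\}|$ (empty sum $=0$ for $k<0$). *)

theory Defs
  imports Main
begin

definition cnbhd :: "'a set \<Rightarrow> ('a \<Rightarrow> 'a \<Rightarrow> bool) \<Rightarrow> 'a set \<Rightarrow> 'a set" where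
  "cnbhd V adj S = S \<union> {x \<in> V. \<exists>s\<in>S. adj s x}"

definition Nstar :: "'a set \<Rightarrow> ('a \<Rightarrow> 'a \<Rightarrow> bool) \<Rightarrow> 'a set \<Rightarrow> 'a set" where
  "Nstar V adj A = {x \<in> V. x \<notin> A \<and>
     (\<exists>a\<in>A. adj a x \<and> (\<forall>y\<in>V. adj a y \<and> y \<notin> A \<longrightarrow> y = x))}"

fun Pk :: "'a set \<Rightarrow> ('a \<Rightarrow> 'a \<Rightarrow> bool) \<Rightarrow> nat \<Rightarrow> 'a set \<Rightarrow> 'a set" where
  "Pk V adj 0 S = cnbhd V adj S"
| "Pk V adj (Suc k) S = Pk V adj k S \<union> Nstar V adj (Pk V adj k S)"

definition Pinf :: "'a set \<Rightarrow> ('a \<Rightarrow> 'a \<Rightarrow> bool) \<Rightarrow> 'a set \<Rightarrow> 'a set" where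
  "Pinf V adj S = (\<Union>k. Pk V adj k S)"

definition power_dom :: "'a set \<Rightarrow> ('a \<Rightarrow> 'a \<Rightarrow> bool) \<Rightarrow> 'a set \<Rightarrow> bool" where
  "power_dom V adj S \<longleftrightarrow> S \<subseteq> V \<and> Pinf V adj S = V"

text \<open>Vertices: None is the stem r'; Some xs is the tree vertex reached from the root
  r = Some [] by the child-index path xs (entries < m, length \<le> h).
  The children of r are r_i = Some [i], i < m.\<close>

definition Vt :: "nat \<Rightarrow> nat \<Rightarrow> nat list option set" where
  "Vt m h = insert None (Some ` {xs. length xs \<le> h \<and> (\<forall>x\<in>set xs. x < m)})"

definition adjt :: "nat \<Rightarrow> nat \<Rightarrow> nat list option \<Rightarrow> nat list option \<Rightarrow> bool" where
  "adjt m h u v \<longleftrightarrow> u \<in> Vt m h \<and> v \<in> Vt m h \<and>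
     ((u = None \<and> v = Some []) \<or> (v = None \<and> u = Some []) \<or>
      (\<exists>xs i. i < m \<and> u = Some xs \<and> v = Some (xs @ [i])) \<or>
      (\<exists>xs i. i < m \<and> v = Some xs \<and> u = Some (xs @ [i])))"

definition typeI :: "nat \<Rightarrow> nat \<Rightarrow> nat list option set \<Rightarrow> bool" where
  "typeI m h S \<longleftrightarrow> S \<subseteq> Vt m h - {None} \<and> power_dom (Vt m h) (adjt m h) S"

definition typeII :: "nat \<Rightarrow> nat \<Rightarrow> nat list option set \<Rightarrow> bool" where
  "typeII m h S \<longleftrightarrow> S \<subseteq> Vt m h - {None} \<and> \<not> power_dom (Vt m h) (adjt m h) S
      \<and> power_dom (Vt m h) (adjt m h) (insert None S)"

text \<open>Counts of Type I / Type II sets of size k (k an integer; zero for k < 0).\<close>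
definition Ecount :: "nat \<Rightarrow> nat \<Rightarrow> int \<Rightarrow> nat" where
  "Ecount m h k = card {S. typeI m h S \<and> int (card S) = k}"

definition Hcount :: "nat \<Rightarrow> nat \<Rightarrow> int \<Rightarrow> nat" where
  "Hcount m h k = card {S. typeII m h S \<and> int (card S) = k}"

text \<open>Multinomial coefficient (length ys; s_0, s_1, ...) where s_a = multiplicity of a in ys.\<close>
definition mcoeff :: "nat list \<Rightarrow> nat" where
  "mcoeff ys = fact (length ys) div (\<Prod>a\<in>set ys. fact (count_list ys a))"

text \<open>The bracket <H^l (+) E^(m-l)>^k_{m,h}; tuples (i_1..i_m) as lists of length m.\<close>
definition bracket :: "nat \<Rightarrow> nat \<Rightarrow> nat \<Rightarrow> int \<Rightarrow> nat" where
  "bracket m h l k = (\<Sum>xs \<in> {xs. length xs = m \<and> sorted (take l xs) \<and> sorted (drop l xs)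
        \<and> int (sum_list xs) = k}.
      (m choose l) * mcoeff (take l xs) * mcoeff (drop l xs)
      * (\<Prod>j<l. Hcount m h (int (xs ! j)))
      * (\<Prod>j\<in>{l..<m}. Ecount m h (int (xs ! j))))"

end

theory Submission
  imports Defs
begin

text \<open>For \<open>h \<le> 1\<close> the tree \<open>T\<^sup>+\<^sub>m\<^sub>,\<^sub>h\<close> is a star centred at the root \<open>r\<close>: every edge contains \<open>r\<close>.
  In a star, once the centre is observed it can force only when a single vertex is still
  unobserved, so \<open>S\<close> power dominates iff it contains the centre, or it is nonempty and its closed
  neighbourhood misses at most one vertex. Consequently the Type I sets of \<open>T\<^sup>+\<^sub>m\<^sub>,\<^sub>1\<close> are the
  sets containing \<open>r\<close> together with the set of all children, the Type II sets are the child sets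
  missing exactly one child \<open>r\<^sub>i\<close> (and they observe everything except \<open>r'\<close> and \<open>r\<^sub>i\<close>), while for
  \<open>T\<^sup>+\<^sub>m\<^sub>,\<^sub>0\<close> the only Type I set is \<open>{r}\<close> and the only Type II set is \<open>\<emptyset>\<close>. Hence
  \<open>H\<^sup>k\<^sub>m\<^sub>,\<^sub>0 = [k = 0]\<close> and \<open>E\<^sup>k\<^sub>m\<^sub>,\<^sub>0 = [k = 1]\<close>, so the only tuple contributing to the bracket
  at height 0 is \<open>(0,\<dots>,0,1,\<dots>,1)\<close>, and both identities reduce to counting subsets.\<close>

lemma Pinf_eq_of_Nstar_empty:
  assumes "cnbhd V adj S = X" and "Nstar V adj X = {}"
  shows "Pinf V adj S = X"
proof -
  have "Pk V adj k S = X" for k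
    using assms by (induction k) auto
  then show ?thesis
    unfolding Pinf_def by simp
qed

lemma Pk_subset:
  assumes "S \<subseteq> V"
  shows "Pk V adj k S \<subseteq> V"
  using assms by (induction k) (auto simp: cnbhd_def Nstar_def)

lemma power_dom_if_Pk_eq:
  assumes "S \<subseteq> V" and "Pk V adj k S = V"
  shows "power_dom V adj S"
  using assms Pk_subset[OF assms(1)] unfolding power_dom_def Pinf_def by blast

definition star_graph :: "'a set \<Rightarrow> ('a \<Rightarrow> 'a \<Rightarrow> bool) \<Rightarrow> 'a \<Rightarrow> bool" where
  "star_graph V adj c \<longleftrightarrow> c \<in> V \<and>
     (\<forall>u v. adj u v \<longleftrightarrow> u \<in> V \<and> v \<in> V \<and> u \<noteq> v \<and> (u = c \<or> v = c))"

context
  fixes V :: "'a set" and adj and c :: 'a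
  assumes star: "star_graph V adj c"
begin

lemma star_cnbhd_center:
  assumes "c \<in> S" and "S \<subseteq> V"
  shows "cnbhd V adj S = V"
  using star assms unfolding star_graph_def cnbhd_def by blast

lemma star_cnbhd_of_center_notin:
  assumes "c \<notin> S" and "S \<subseteq> V" and "S \<noteq> {}"
  shows "cnbhd V adj S = insert c S"
  using star assms unfolding star_graph_def cnbhd_def by blast

lemma star_Nstar:
  assumes "c \<in> X" and "X \<subseteq> V"
  shows "Nstar V adj X = (if card (V - X) = 1 then V - X else {})"
proof (cases "card (V - X) = 1")
  case True
  then obtain x where "V - X = {x}"
    by (auto simp: card_Suc_eq)
  then show ?thesis
    using star assms unfolding star_graph_def Nstar_def by auto
next
  case False
  have "x \<notin> Nstar V adj X" for x
  proof
    assume "x \<in> Nstar V adj X"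
    then have "x \<in> V - X" and "\<And>y. y \<in> V - X \<Longrightarrow> y = x"
      using star assms unfolding star_graph_def Nstar_def by auto
    then have "V - X = {x}"
      by blast
    then show False
      using False by simp
  qed
  then show ?thesis
    using False by auto
qed

lemma star_power_dom_iff:
  assumes "finite V" and "S \<subseteq> V"
  shows "power_dom V adj S \<longleftrightarrow> c \<in> S \<or> (S \<noteq> {} \<and> card (V - insert c S) \<le> 1)"
proof (cases "c \<in> S")
  case True
  then have "Pk V adj 0 S = V"
    using star_cnbhd_center[OF True assms(2)] by simp
  then show ?thesis
    using True power_dom_if_Pk_eq[OF assms(2)] by blast
next
  case cS: False
  show ?thesis
  proof (cases "S = {}")
    case True
    have "Pinf V adj {} = {}"
      by (rule Pinf_eq_of_Nstar_empty) (auto simp: cnbhd_def Nstar_def)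
    moreover have "V \<noteq> {}"
      using star unfolding star_graph_def by blast
    ultimately show ?thesis
      using True unfolding power_dom_def by simp
  next
    case False
    let ?X = "insert c S"
    have X: "c \<in> ?X" "?X \<subseteq> V"
      using star assms unfolding star_graph_def by auto
    have cn: "cnbhd V adj S = ?X"
      using star_cnbhd_of_center_notin[OF cS assms(2) False] .
    show ?thesis
    proof (cases "card (V - ?X) \<le> 1")
      case True
      then consider "V - ?X = {}" | "card (V - ?X) = 1"
        using assms(1) by (force simp: le_Suc_eq)
      then have "?X \<union> Nstar V adj ?X = V"
      proof cases
        case 1
        then show ?thesis
          using X unfolding Nstar_def by blast
      next
        case 2
        then show ?thesis
          using X star_Nstar[OF X] by auto
      qed
      then have "Pk V adj (Suc 0) S = V"
        by (simp add: cn)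
      then show ?thesis
        using True False power_dom_if_Pk_eq[OF assms(2)] by blast
    next
      case big: False
      then have "Nstar V adj ?X = {}" and "?X \<noteq> V"
        using star_Nstar[OF X] by auto
      then have "Pinf V adj S \<noteq> V"
        using Pinf_eq_of_Nstar_empty[OF cn] by simp
      then show ?thesis
        using cS big unfolding power_dom_def by simp
    qed
  qed
qed

end

definition root_children :: "nat \<Rightarrow> nat list option set" where
  "root_children m = (\<lambda>i. Some [i]) ` {..<m}"

lemma Vt_height0: "Vt m 0 = {None, Some []}"
  unfolding Vt_def by auto

text \<open>Stated for \<open>Suc 0\<close> rather than \<open>1\<close>, the simp normal form of \<open>1 :: nat\<close>.\<close>
lemma Vt_height1: "Vt m (Suc 0) = insert None (insert (Some []) (root_children m))"
proof -
  have "length xs \<le> 1 \<longleftrightarrow> xs = [] \<or> (\<exists>i. xs = [i])" for xs :: "nat list"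
    by (cases xs) auto
  then show ?thesis
    unfolding Vt_def root_children_def by auto
qed

lemma finite_Vt: "finite (Vt m h)"
proof -
  have "{xs. length xs \<le> h \<and> (\<forall>x\<in>set xs. x < m)} \<subseteq> {xs. set xs \<subseteq> {..<m} \<and> length xs \<le> h}"
    by auto
  then show ?thesis
    unfolding Vt_def using finite_lists_length_le[of "{..<m}" h] finite_subset by blast
qed

lemma star_graph_Vt:
  assumes "h \<le> 1"
  shows "star_graph (Vt m h) (adjt m h) (Some [])"
proof -
  have short: "xs = [] \<or> (\<exists>i<m. xs = [i])" if "Some xs \<in> Vt m h" for xs
  proof -
    have "length xs \<le> 1" "\<forall>x\<in>set xs. x < m"
      using that assms unfolding Vt_def by auto
    then show ?thesis
      by (cases xs) auto
  qed
  have "Some (xs @ [i]) \<in> Vt m h \<Longrightarrow> xs = []" for xs i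
    using short[of "xs @ [i]"] by auto
  moreover have "v \<in> Vt m h \<Longrightarrow> v = None \<or> v = Some [] \<or> (\<exists>i<m. v = Some ([] @ [i]))" for v
    using short unfolding Vt_def by auto
  moreover have "None \<in> Vt m h" "Some [] \<in> Vt m h"
    unfolding Vt_def by auto
  ultimately show ?thesis
    unfolding star_graph_def adjt_def by blast
qed

lemma power_dom_Vt_iff:
  assumes "h \<le> 1" and "S \<subseteq> Vt m h"
  shows "power_dom (Vt m h) (adjt m h) S \<longleftrightarrow>
    Some [] \<in> S \<or> (S \<noteq> {} \<and> card (Vt m h - insert (Some []) S) \<le> 1)"
  using star_power_dom_iff[OF star_graph_Vt[OF assms(1)] finite_Vt assms(2)] .

lemma typeI_height0_iff: "typeI m 0 S \<longleftrightarrow> S = {Some []}"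
proof -
  have "Vt m 0 - {None} = {Some []}"
    by (auto simp: Vt_height0)
  then show ?thesis
    unfolding typeI_def using power_dom_Vt_iff[of 0 S m] by auto
qed

lemma typeII_height0_iff: "typeII m 0 S \<longleftrightarrow> S = {}"
proof -
  have V: "Vt m 0 - {None} = {Some []}" "Vt m 0 - insert (Some []) {None} = {}"
    by (auto simp: Vt_height0)
  have "power_dom (Vt m 0) (adjt m 0) {None}"
    using power_dom_Vt_iff[of 0 "{None}" m] V(2) by (simp add: Vt_height0)
  moreover have "\<not> power_dom (Vt m 0) (adjt m 0) {}"
    using power_dom_Vt_iff[of 0 "{}" m] by simp
  ultimately show ?thesis
    using typeI_height0_iff[of m S] unfolding typeII_def typeI_def V(1) by auto
qed

lemma root_children_simps [simp]:
  "None \<notin> root_children m" "Some [] \<notin> root_children m"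
  "finite (root_children m)" "card (root_children m) = m"
  unfolding root_children_def by (auto simp: card_image inj_on_def)

lemma power_dom_height1_of_subset_children:
  assumes "0 < m" and "S \<subseteq> root_children m"
  shows "power_dom (Vt m 1) (adjt m 1) S \<longleftrightarrow> S = root_children m"
proof -
  let ?L = "root_children m"
  have "Some [] \<notin> S"
    using assms(2) by auto
  have "Vt m 1 - insert (Some []) S = insert None (?L - S)"
    using assms(2) by (auto simp: Vt_height1)
  then have "card (Vt m 1 - insert (Some []) S) \<le> 1 \<longleftrightarrow> ?L - S = {}"
    by (simp add: finite_subset)
  moreover have "?L \<noteq> {}"
    using assms(1) unfolding root_children_def by auto
  moreover have "S \<subseteq> Vt m 1"
    using assms(2) by (auto simp: Vt_height1)
  ultimately show ?thesis
    using power_dom_Vt_iff[of 1 S m] \<open>Some [] \<notin> S\<close> assms(2) by auto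
qed

lemma typeI_height1_iff:
  assumes "0 < m"
  shows "typeI m 1 S \<longleftrightarrow>
    (Some [] \<in> S \<and> S \<subseteq> insert (Some []) (root_children m)) \<or> S = root_children m"
proof -
  have V: "Vt m 1 - {None} = insert (Some []) (root_children m)"
    by (auto simp: Vt_height1)
  show ?thesis
  proof (cases "Some [] \<in> S")
    case True
    then show ?thesis
      unfolding typeI_def V using power_dom_Vt_iff[of 1 S m] by (auto simp: Vt_height1)
  next
    case False
    then show ?thesis
      unfolding typeI_def V using power_dom_height1_of_subset_children[OF assms, of S]
      by (auto simp: subset_insert)
  qed
qed

lemma power_dom_height1_insert_stem:
  assumes "S \<subseteq> root_children m"
  shows "power_dom (Vt m 1) (adjt m 1) (insert None S) \<longleftrightarrow> card (root_children m - S) \<le> 1"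
proof -
  have "Vt m 1 - insert (Some []) (insert None S) = root_children m - S"
    using assms by (auto simp: Vt_height1)
  moreover have "insert None S \<subseteq> Vt m 1" "Some [] \<notin> insert None S"
    using assms by (auto simp: Vt_height1)
  ultimately show ?thesis
    using power_dom_Vt_iff[of 1 "insert None S" m] by simp
qed

lemma typeII_height1_iff:
  assumes "2 \<le> m"
  shows "typeII m 1 S \<longleftrightarrow> (\<exists>x\<in>root_children m. S = root_children m - {x})"
    (is "_ \<longleftrightarrow> ?rhs")
proof -
  let ?L = "root_children m"
  have V: "Vt m 1 - {None} = insert (Some []) ?L"
    by (auto simp: Vt_height1)
  have "typeII m 1 S \<longleftrightarrow> S \<subseteq> ?L \<and> S \<noteq> ?L \<and> card (?L - S) \<le> 1"
  proof (cases "S \<subseteq> ?L")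
    case True
    then show ?thesis
      unfolding typeII_def V using assms power_dom_height1_of_subset_children[of m S]
        power_dom_height1_insert_stem[OF True] by auto
  next
    case False
    have "typeII m 1 S \<Longrightarrow> Some [] \<in> S"
      using False unfolding typeII_def V by auto
    then have "\<not> typeII m 1 S"
      unfolding typeII_def V using power_dom_Vt_iff[of 1 S m] by (auto simp: Vt_height1)
    then show ?thesis
      using False by blast
  qed
  also have "\<dots> \<longleftrightarrow> ?rhs"
  proof
    assume S: "S \<subseteq> ?L \<and> S \<noteq> ?L \<and> card (?L - S) \<le> 1"
    then have "?L - S \<noteq> {}"
      by blast
    then have "card (?L - S) = 1"
      using S by (simp add: le_Suc_eq)
    then obtain x where "?L - S = {x}"
      by (auto simp: card_Suc_eq)
    then show ?rhs
      using S by blast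
  next
    assume ?rhs
    then show "S \<subseteq> ?L \<and> S \<noteq> ?L \<and> card (?L - S) \<le> 1"
      by (auto simp: Diff_Diff_Int Int_absorb1)
  qed
  finally show ?thesis .
qed

lemma Pinf_height1_child_removed:
  assumes "2 \<le> m" and "x \<in> root_children m"
  shows "Pinf (Vt m 1) (adjt m 1) (root_children m - {x}) = insert (Some []) (root_children m - {x})"
proof -
  let ?S = "root_children m - {x}" and ?X = "insert (Some []) (root_children m - {x})"
  have star: "star_graph (Vt m 1) (adjt m 1) (Some [])"
    by (rule star_graph_Vt) simp
  have "card ?S \<noteq> 0"
    using assms by simp
  then have "?S \<noteq> {}"
    by auto
  then have "cnbhd (Vt m 1) (adjt m 1) ?S = ?X"
    by (intro star_cnbhd_of_center_notin[OF star]) (auto simp: Vt_height1)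
  moreover have "Nstar (Vt m 1) (adjt m 1) ?X = {}"
  proof -
    have X: "Some [] \<in> ?X" "?X \<subseteq> Vt m 1" and rest: "Vt m 1 - ?X = {None, x}"
      using assms(2) by (auto simp: Vt_height1)
    have "x \<noteq> None"
      using assms(2) by (auto simp: root_children_def)
    then show ?thesis
      unfolding star_Nstar[OF star X] rest by auto
  qed
  ultimately show ?thesis
    by (rule Pinf_eq_of_Nstar_empty)
qed

lemma Ecount_height0: "Ecount m 0 k = (if k = 1 then 1 else 0)"
proof -
  have "{S. typeI m 0 S \<and> int (card S) = k} = (if k = 1 then {{Some []}} else {})"
    by (auto simp: typeI_height0_iff)
  then show ?thesis
    unfolding Ecount_def by simp
qed

lemma Hcount_height0: "Hcount m 0 k = (if k = 0 then 1 else 0)"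
proof -
  have "{S. typeII m 0 S \<and> int (card S) = k} = (if k = 0 then {{}} else {})"
    by (auto simp: typeII_height0_iff)
  then show ?thesis
    unfolding Hcount_def by simp
qed

lemma mcoeff_replicate: "mcoeff (replicate n a) = 1"
  by (cases "n = 0") (auto simp: mcoeff_def count_list_eq_length_filter)

lemma bracket_height0_summand:
  assumes "length xs = m" and "l \<le> m"
  shows "(m choose l) * mcoeff (take l xs) * mcoeff (drop l xs)
      * (\<Prod>j<l. Hcount m 0 (int (xs ! j))) * (\<Prod>j\<in>{l..<m}. Ecount m 0 (int (xs ! j)))
    = (if xs = replicate l 0 @ replicate (m - l) 1 then m choose l else 0)"
proof (cases "xs = replicate l 0 @ replicate (m - l) 1")
  case True
  have "(\<Prod>j<l. Hcount m 0 (int (xs ! j))) = 1"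
    using True by (intro prod.neutral) (simp add: Hcount_height0 nth_append)
  moreover have "(\<Prod>j\<in>{l..<m}. Ecount m 0 (int (xs ! j))) = 1"
    using True assms(2) by (intro prod.neutral) (auto simp: Ecount_height0 nth_append)
  ultimately show ?thesis
    using True assms(2) by (simp add: mcoeff_replicate)
next
  case differs: False
  then obtain j where j: "j < m" "xs ! j \<noteq> (replicate l 0 @ replicate (m - l) 1) ! j"
    using assms by (metis length_append length_replicate le_add_diff_inverse nth_equalityI)
  show ?thesis
  proof (cases "j < l")
    case True
    then have "(\<Prod>j<l. Hcount m 0 (int (xs ! j))) = 0"
      using j by (auto simp: Hcount_height0 nth_append)
    then show ?thesis
      using differs by simp
  next
    case False
    then have "(\<Prod>j\<in>{l..<m}. Ecount m 0 (int (xs ! j))) = 0"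
      using j assms(2) by (auto simp: Ecount_height0 nth_append)
    then show ?thesis
      using differs by simp
  qed
qed

lemma bracket_height0:
  assumes "l \<le> m"
  shows "bracket m 0 l k = (if k = int (m - l) then m choose l else 0)"
proof -
  define A where "A = {xs. length xs = m \<and> sorted (take l xs) \<and> sorted (drop l xs)
    \<and> int (sum_list xs) = k}"
  define x0 where "x0 = replicate l (0::nat) @ replicate (m - l) 1"
  have "A \<subseteq> {xs. set xs \<subseteq> {..nat k} \<and> length xs = m}"
    unfolding A_def using member_le_sum_list by fastforce
  then have "finite A"
    using finite_lists_length_eq[of "{..nat k}" m] finite_subset by blast
  have "bracket m 0 l k = (\<Sum>xs\<in>A. if xs = x0 then m choose l else 0)"
    unfolding bracket_def A_def[symmetric] x0_def
    by (rule sum.cong[OF refl], rule bracket_height0_summand) (simp_all add: A_def assms)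
  also have "\<dots> = (if x0 \<in> A then m choose l else 0)"
    using \<open>finite A\<close> by simp
  also have "x0 \<in> A \<longleftrightarrow> k = int (m - l)"
    unfolding A_def x0_def using assms by (auto simp: sum_list_replicate)
  finally show ?thesis .
qed

lemma sum_bracket_height0:
  "(\<Sum>l=0..m. bracket m 0 l (int k - 1)) = (if k = 0 then 0 else m choose (k - 1))"
proof (cases k)
  case 0
  then show ?thesis
    by (simp add: bracket_height0)
next
  case (Suc j)
  have "(\<Sum>l=0..m. bracket m 0 l (int k - 1))
      = (\<Sum>l=0..m. if l = m - j \<and> j \<le> m then m choose l else 0)"
    using Suc by (intro sum.cong refl) (auto simp: bracket_height0)
  also have "\<dots> = (if j \<le> m then m choose (m - j) else 0)"
    by (cases "j \<le> m") simp_all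
  also have "\<dots> = m choose j"
    by (simp add: binomial_symmetric[symmetric] binomial_eq_0)
  finally show ?thesis
    using Suc by simp
qed

lemma card_subsets_containing:
  assumes "finite A" and "x \<notin> A"
  shows "card {S. S \<subseteq> insert x A \<and> x \<in> S \<and> card S = Suc j} = card A choose j"
proof -
  have "{S. S \<subseteq> insert x A \<and> x \<in> S \<and> card S = Suc j} = insert x ` {T. T \<subseteq> A \<and> card T = j}"
  proof (intro equalityI subsetI)
    fix S assume S: "S \<in> {S. S \<subseteq> insert x A \<and> x \<in> S \<and> card S = Suc j}"
    then have "S - {x} \<subseteq> A" "card (S - {x}) = j"
      using assms(1) by (auto dest: finite_subset)
    then show "S \<in> insert x ` {T. T \<subseteq> A \<and> card T = j}"
      using S by (intro image_eqI[of _ _ "S - {x}"]) auto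
  next
    fix S assume "S \<in> insert x ` {T. T \<subseteq> A \<and> card T = j}"
    then show "S \<in> {S. S \<subseteq> insert x A \<and> x \<in> S \<and> card S = Suc j}"
      using assms by (auto intro!: card_insert_disjoint dest: finite_subset)
  qed
  moreover have "inj_on (insert x) {T. T \<subseteq> A \<and> card T = j}"
    using assms(2) by (auto simp: inj_on_def)
  ultimately show ?thesis
    using assms(1) by (simp add: card_image n_subsets)
qed

lemma Ecount_height1:
  assumes "0 < m"
  shows "Ecount m 1 (int k) = (if k = m then 1 else 0) + (if k = 0 then 0 else m choose (k - 1))"
proof -
  let ?L = "root_children m"
  define A where "A = {S. S \<subseteq> insert (Some []) ?L \<and> Some [] \<in> S \<and> card S = k}"
  have "{S. typeI m 1 S \<and> int (card S) = int k} = A \<union> (if k = m then {?L} else {})"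
    unfolding A_def typeI_height1_iff[OF assms] by auto
  moreover have "finite A"
    unfolding A_def by (rule finite_subset[of _ "Pow (insert (Some []) ?L)"]) auto
  moreover have "?L \<notin> A"
    unfolding A_def by simp
  moreover have "card A = (if k = 0 then 0 else m choose (k - 1))"
  proof (cases k)
    case 0
    have "A = {}"
      unfolding A_def 0 using finite_subset[of _ "insert (Some []) ?L"]
      by (auto simp: card_gt_0_iff)
    then show ?thesis
      using 0 by simp
  next
    case (Suc j)
    then show ?thesis
      unfolding A_def using card_subsets_containing[of ?L "Some []" j] by simp
  qed
  ultimately show ?thesis
    unfolding Ecount_def by auto
qed

lemma Hcount_height1:
  assumes "2 \<le> m"
  shows "Hcount m 1 (int k) = (if k = m - 1 then m else 0)"
proof -
  let ?L = "root_children m"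
  have "{S. typeII m 1 S \<and> int (card S) = int k} = (if k = m - 1 then (\<lambda>x. ?L - {x}) ` ?L else {})"
    unfolding typeII_height1_iff[OF assms] by auto
  moreover have "inj_on (\<lambda>x. ?L - {x}) ?L"
    by (auto simp: inj_on_def)
  ultimately show ?thesis
    unfolding Hcount_def by (simp add: card_image)
qed

lemma closed_nbhd_root_minus_Pinf_height1:
  assumes "2 \<le> m" and "x \<in> root_children m"
  shows "cnbhd (Vt m 1) (adjt m 1) {Some []} - Pinf (Vt m 1) (adjt m 1) (root_children m - {x})
    = {None, x}"
proof -
  have "cnbhd (Vt m 1) (adjt m 1) {Some []} = Vt m 1"
    by (rule star_cnbhd_center[OF star_graph_Vt]) (auto simp: Vt_height1)
  then show ?thesis
    unfolding Pinf_height1_child_removed[OF assms] using assms(2) by (auto simp: Vt_height1)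
qed

theorem mainTheorem5:
  fixes m :: nat
  assumes "m \<ge> 2"
  shows "(\<forall>S. typeII m 1 S \<longrightarrow>
            (\<exists>i<m. cnbhd (Vt m 1) (adjt m 1) {Some []} - Pinf (Vt m 1) (adjt m 1) S
                   = {None, Some [i]}))
       \<and> (\<forall>k::nat.
            Hcount m 1 (int k) = bracket m 0 1 (int k)
          \<and> Ecount m 1 (int k) = bracket m 0 0 (int k)
               + (\<Sum>l=0..m. bracket m 0 l (int k - 1)))"
proof (intro conjI allI impI)
  fix S
  assume "typeII m 1 S"
  then obtain i where "i < m" and "S = root_children m - {Some [i]}"
    using typeII_height1_iff[OF assms] by (auto simp: root_children_def)
  then show "\<exists>i<m. cnbhd (Vt m 1) (adjt m 1) {Some []} - Pinf (Vt m 1) (adjt m 1) S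
      = {None, Some [i]}"
    using closed_nbhd_root_minus_Pinf_height1[OF assms] by (auto simp: root_children_def)
next
  fix k :: nat
  show "Hcount m 1 (int k) = bracket m 0 1 (int k)"
    using Hcount_height1[OF assms, of k] bracket_height0[of 1 m "int k"] assms by auto
  show "Ecount m 1 (int k) = bracket m 0 0 (int k) + (\<Sum>l=0..m. bracket m 0 l (int k - 1))"
    using Ecount_height1[of m k] bracket_height0[of 0 m "int k"] sum_bracket_height0[of m k] assms
    by simp
qed

end
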